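(* Let $n=ab$ where $a\ge b\ge 2$ are integers. Fix an integer $\beta\ge 2$, and for a positive integer $d$ define $\vartheta_d:\{0,1,\ldots,n-1\}\to\mathbb{Z}_{\ge 0}$ by $\vartheta_d(x)=\beta\lfloor x/d\rfloor d+(x\bmod d)$. Let $X$ be the $n\times n$ matrix with entries $X_{j,k}=\frac{1}{\sqrt n}\zeta_{\beta n}^{\vartheta_a(j)\vartheta_b(k)}$ for $j,k\in\{0,\ldots,n-1\}$, where $\zeta_m=e^{2\pi\mathtt{i}/m}$. Then $X$ is type-II. Moreover, if $G$ is the graph with adjacency matrix $A=X\,\mathrm{diag}(\vartheta_b(0),\ldots,\vartheta_b(n-1))\,X^{-1}$ (i.e. eigenvalues $\{\vartheta_b(k)\}$ with $A$ unitarily diagonalized by $X$), then $G$ has universal perfect state transfer.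
   Context: A type-II matrix is a unitary matrix all of whose entries have the same modulus. $x\bmod d$ denotes the remainder in $\{0,\ldots,d-1\}$. A graph with Hermitian adjacency matrix $A$ has universal perfect state transfer if for every pair of vertices $v,w$ there is $t>0$ with $|\langle w|e^{-\mathtt{i} At}|v\rangle|=1$. *)

theory Defs
  imports Complex_Main
begin

text \<open>n x n complex matrices are represented as functions nat => nat => complex;
  only entries with indices in {0..<n} are meaningful.\<close>

definition mmult :: "nat \<Rightarrow> (nat \<Rightarrow> nat \<Rightarrow> complex) \<Rightarrow> (nat \<Rightarrow> nat \<Rightarrow> complex) \<Rightarrow> nat \<Rightarrow> nat \<Rightarrow> complex" where
  "mmult n M N = (\<lambda>i j. \<Sum>k<n. M i k * N k j)"

definition idm :: "nat \<Rightarrow> nat \<Rightarrow> complex" where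
  "idm = (\<lambda>i j. if i = j then 1 else 0)"

definition adj :: "(nat \<Rightarrow> nat \<Rightarrow> complex) \<Rightarrow> nat \<Rightarrow> nat \<Rightarrow> complex" where
  "adj M = (\<lambda>i j. cnj (M j i))"

definition mat_eq :: "nat \<Rightarrow> (nat \<Rightarrow> nat \<Rightarrow> complex) \<Rightarrow> (nat \<Rightarrow> nat \<Rightarrow> complex) \<Rightarrow> bool" where
  "mat_eq n M N \<longleftrightarrow> (\<forall>i<n. \<forall>j<n. M i j = N i j)"

definition unitary :: "nat \<Rightarrow> (nat \<Rightarrow> nat \<Rightarrow> complex) \<Rightarrow> bool" where
  "unitary n U \<longleftrightarrow> mat_eq n (mmult n U (adj U)) idm \<and> mat_eq n (mmult n (adj U) U) idm"

definition type_II :: "nat \<Rightarrow> (nat \<Rightarrow> nat \<Rightarrow> complex) \<Rightarrow> bool" where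
  "type_II n U \<longleftrightarrow> unitary n U \<and> (\<exists>c. \<forall>j<n. \<forall>k<n. cmod (U j k) = c)"

definition is_inverse :: "nat \<Rightarrow> (nat \<Rightarrow> nat \<Rightarrow> complex) \<Rightarrow> (nat \<Rightarrow> nat \<Rightarrow> complex) \<Rightarrow> bool" where
  "is_inverse n M N \<longleftrightarrow> mat_eq n (mmult n M N) idm \<and> mat_eq n (mmult n N M) idm"

fun mpow :: "nat \<Rightarrow> (nat \<Rightarrow> nat \<Rightarrow> complex) \<Rightarrow> nat \<Rightarrow> nat \<Rightarrow> nat \<Rightarrow> complex" where
  "mpow n M 0 = idm"
| "mpow n M (Suc k) = mmult n (mpow n M k) M"

definition mexp :: "nat \<Rightarrow> (nat \<Rightarrow> nat \<Rightarrow> complex) \<Rightarrow> nat \<Rightarrow> nat \<Rightarrow> complex" where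
  "mexp n M = (\<lambda>i j. \<Sum>k. mpow n M k i j / of_nat (fact k))"

definition transition :: "nat \<Rightarrow> (nat \<Rightarrow> nat \<Rightarrow> complex) \<Rightarrow> real \<Rightarrow> nat \<Rightarrow> nat \<Rightarrow> complex" where
  "transition n A t = mexp n (\<lambda>i j. - \<i> * complex_of_real t * A i j)"

text \<open>Universal perfect state transfer; vertices are 0..<n, and
  the entry \<langle>w|U(t)|v\<rangle> is transition n A t w v.\<close>
definition universal_pst :: "nat \<Rightarrow> (nat \<Rightarrow> nat \<Rightarrow> complex) \<Rightarrow> bool" where
  "universal_pst n A \<longleftrightarrow> (\<forall>v<n. \<forall>w<n. \<exists>t>0. cmod (transition n A t w v) = 1)"

definition vartheta :: "nat \<Rightarrow> nat \<Rightarrow> nat \<Rightarrow> nat" where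
  "vartheta \<beta> d x = \<beta> * (x div d) * d + x mod d"

definition zeta :: "nat \<Rightarrow> complex" where
  "zeta m = exp (2 * complex_of_real pi * \<i> / of_nat m)"

definition diagm :: "(nat \<Rightarrow> complex) \<Rightarrow> nat \<Rightarrow> nat \<Rightarrow> complex" where
  "diagm f = (\<lambda>i j. if i = j then f i else 0)"

end

theory Submission
  imports Defs
begin

text \<open>Writing j = q a + r and \<vartheta>_b(k) = \<beta> s b + u
  with r, s < a and q, u < b, the exponent \<vartheta>_a(j) \<vartheta>_b(k) / (\<beta> n) is an integer plus
  q u / b + r s / a + r u / (\<beta> n); hence the inner product of two columns (and symmetrically of
  two rows) factors into geometric sums of roots of unity of orders b and a, which vanish unless
  the indices agree. For perfect state transfer from v to w, diagonalise A by X: the (w, v) entry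
  of exp(-i t A) is the sum over l of X(w,l) exp(-i t \<vartheta>_b(l)) conj(X(v,l)), and
  X(w,l) = X(v,l) \<zeta>^((\<vartheta>_a(w) - \<vartheta>_a(v)) \<vartheta>_b(l)) with \<zeta> = \<zeta>_(\<beta> n). Since the
  eigenvalues \<vartheta>_b(l) are integers, any t congruent to 2\<pi> (\<vartheta>_a(w) - \<vartheta>_a(v)) / (\<beta> n)
  modulo 2\<pi> cancels all these phases at once, and the entry becomes (X X^*)(v,v) = 1.\<close>

lemma sum_idm_left: "i < n \<Longrightarrow> (\<Sum>q<n. idm i q * f q) = f i"
  by (simp add: idm_def if_distrib[of "\<lambda>x. x * _"] cong: if_cong)

lemma sum_idm_right: "j < n \<Longrightarrow> (\<Sum>q<n. f q * idm q j) = f j"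
  by (simp add: idm_def if_distrib[of "\<lambda>x. _ * x"] eq_commute[of _ j] cong: if_cong)

lemma mmult_diagm_mmult:
  "mmult n (mmult n X (diagm c)) Y i j = (\<Sum>l<n. X i l * c l * Y l j)"
proof -
  have "(\<Sum>r<n. X i r * diagm c r l) = X i l * c l" if "l < n" for l
    using that by (simp add: diagm_def if_distrib[of "\<lambda>x. _ * x"] eq_commute[of _ l] cong: if_cong)
  then show ?thesis by (simp add: mmult_def)
qed

lemma right_inverse_unique:
  assumes "is_inverse n X Y" and XZ: "mat_eq n (mmult n X Z) idm"
  shows "mat_eq n Z Y"
  unfolding mat_eq_def
proof (intro allI impI)
  fix i j assume i: "i < n" and j: "j < n"
  have YX: "(\<Sum>p<n. Y i p * X p q) = idm i q" if "q < n" for q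
    using assms(1) i that by (simp add: is_inverse_def mat_eq_def mmult_def)
  have "Y i j = (\<Sum>p<n. Y i p * (\<Sum>q<n. X p q * Z q j))"
    using XZ j by (simp add: mat_eq_def mmult_def sum_idm_right)
  also have "\<dots> = (\<Sum>p<n. \<Sum>q<n. Y i p * X p q * Z q j)"
    by (simp add: sum_distrib_left mult.assoc)
  also have "\<dots> = (\<Sum>q<n. (\<Sum>p<n. Y i p * X p q) * Z q j)"
    by (subst sum.swap) (simp add: sum_distrib_right)
  also have "\<dots> = Z i j"
    using i by (simp add: YX sum_idm_left)
  finally show "Z i j = Y i j" by simp
qed

lemma unitary_inverse_eq_adj:
  assumes "unitary n U" and "is_inverse n U V"
  shows "mat_eq n V (adj U)"
  using assms right_inverse_unique[of n U "adj U" V]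
  by (simp add: unitary_def is_inverse_def)

lemma mpow_conj_diagm:
  assumes inv: "is_inverse n X Y" and M: "mat_eq n M (mmult n (mmult n X (diagm c)) Y)"
  shows "mat_eq n (mpow n M k) (mmult n (mmult n X (diagm (\<lambda>l. c l ^ k))) Y)"
proof (induction k)
  case 0
  then show ?case
    using inv unfolding mmult_diagm_mmult by (simp add: is_inverse_def mat_eq_def mmult_def)
next
  case (Suc k)
  have YX: "(\<Sum>p<n. Y l p * X p q) = idm l q" if "l < n" "q < n" for l q
    using inv that by (simp add: is_inverse_def mat_eq_def mmult_def)
  show ?case unfolding mat_eq_def
  proof (intro allI impI)
    fix i j assume i: "i < n" and j: "j < n"
    have "mpow n M (Suc k) i j = (\<Sum>p<n. mpow n M k i p * M p j)"
      by (simp add: mmult_def)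
    also have "\<dots> = (\<Sum>p<n. (\<Sum>l<n. X i l * c l ^ k * Y l p) * (\<Sum>q<n. X p q * c q * Y q j))"
      using Suc M i j by (simp add: mat_eq_def mmult_diagm_mmult)
    also have "\<dots> = (\<Sum>p<n. \<Sum>l<n. \<Sum>q<n. X i l * c l ^ k * (Y l p * X p q) * (c q * Y q j))"
      unfolding sum_product by (intro sum.cong refl) (simp only: mult_ac)
    also have "\<dots> = (\<Sum>l<n. \<Sum>q<n. \<Sum>p<n. X i l * c l ^ k * (Y l p * X p q) * (c q * Y q j))"
      by (subst sum.swap) (intro sum.cong refl sum.swap)
    also have "\<dots> = (\<Sum>l<n. \<Sum>q<n. X i l * c l ^ k * (\<Sum>p<n. Y l p * X p q) * (c q * Y q j))"
      by (simp add: sum_distrib_left sum_distrib_right)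
    also have "\<dots> = (\<Sum>l<n. X i l * c l ^ k * (\<Sum>q<n. idm l q * (c q * Y q j)))"
      by (intro sum.cong refl) (simp add: YX sum_distrib_left mult.assoc)
    also have "\<dots> = (\<Sum>l<n. X i l * c l ^ Suc k * Y l j)"
      by (intro sum.cong refl) (simp add: sum_idm_left)
    finally show "mpow n M (Suc k) i j = mmult n (mmult n X (diagm (\<lambda>l. c l ^ Suc k))) Y i j"
      by (simp add: mmult_diagm_mmult)
  qed
qed

lemma mexp_conj_diagm:
  assumes inv: "is_inverse n X Y" and M: "mat_eq n M (mmult n (mmult n X (diagm c)) Y)"
  shows "mat_eq n (mexp n M) (mmult n (mmult n X (diagm (\<lambda>l. exp (c l)))) Y)"
  unfolding mat_eq_def
proof (intro allI impI)
  fix i j assume i: "i < n" and j: "j < n"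
  have "(\<lambda>k. c l ^ k / of_nat (fact k)) sums exp (c l)" for l
    using exp_converges[of "c l"] by (simp add: scaleR_conv_of_real divide_inverse mult.commute)
  then have "(\<lambda>k. \<Sum>l<n. X i l * Y l j * (c l ^ k / of_nat (fact k))) sums (\<Sum>l<n. X i l * Y l j * exp (c l))"
    by (intro sums_sum sums_mult)
  moreover have "mpow n M k i j / of_nat (fact k) = (\<Sum>l<n. X i l * Y l j * (c l ^ k / of_nat (fact k)))" for k
    using mpow_conj_diagm[OF inv M, of k] i j
    by (simp add: mat_eq_def mmult_diagm_mmult sum_divide_distrib mult_ac)
  ultimately show "mexp n M i j = mmult n (mmult n X (diagm (\<lambda>l. exp (c l)))) Y i j"
    by (simp add: mexp_def mmult_diagm_mmult sums_iff mult_ac)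
qed

lemma transition_conj_diagm:
  assumes "is_inverse n X Y"
  shows "mat_eq n (transition n (mmult n (mmult n X (diagm \<mu>)) Y) t)
           (mmult n (mmult n X (diagm (\<lambda>l. exp (- \<i> * of_real t * \<mu> l)))) Y)"
  unfolding transition_def
  by (rule mexp_conj_diagm[OF assms])
    (simp add: mat_eq_def mmult_diagm_mmult sum_distrib_left mult_ac)

lemma zeta_power: "zeta N ^ m = cis (2 * pi * real m / real N)"
  by (simp add: zeta_def cis_conv_exp exp_of_nat_mult[symmetric] mult_ac)

lemma universal_pst_zeta_power_matrix:
  fixes f g :: "nat \<Rightarrow> nat"
  assumes U: "unitary n X" and N: "0 < N"
    and X: "\<forall>j<n. \<forall>k<n. X j k = c * zeta N ^ (f j * g k)"
    and inv: "is_inverse n X Y"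
  shows "universal_pst n (mmult n (mmult n X (diagm (\<lambda>k. of_nat (g k)))) Y)"
  unfolding universal_pst_def
proof (intro allI impI)
  fix v w assume v: "v < n" and w: "w < n"
  \<comment> \<open>the summand 2\<pi> (f v + 1) only serves to make t positive\<close>
  define t where "t = 2 * pi * ((real (f w) - real (f v)) / N + real (f v) + 1)"
  have "0 \<le> real (f w) / N" "real (f v) / N \<le> real (f v)"
    using N by (simp_all add: divide_le_eq mult_le_cancel_left1)
  then have "t > 0"
    unfolding t_def diff_divide_distrib using pi_gt_zero by (intro mult_pos_pos) linarith+
  have shift: "X w l * exp (- \<i> * of_real t * of_nat (g l)) = X v l" if l: "l < n" for l
  proof -
    have "2 * pi * real (f w * g l) / N - t * g l
        = 2 * pi * real (f v * g l) / N + 2 * pi * of_int (- int (g l * (f v + 1)))"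
      using N by (simp add: t_def field_simps)
    then have "cis (2 * pi * real (f w * g l) / N) * cis (- (t * g l)) = cis (2 * pi * real (f v * g l) / N)"
      by (simp add: cis_mult cis_multiple_2pi flip: cis_mult[of _ "2 * pi * _"])
    moreover have "exp (- \<i> * of_real t * of_nat (g l)) = cis (- (t * g l))"
      by (simp add: cis_conv_exp mult_ac)
    ultimately show ?thesis
      using X v w l by (simp add: zeta_power mult_ac)
  qed
  have "transition n (mmult n (mmult n X (diagm (\<lambda>k. of_nat (g k)))) Y) t w v
      = (\<Sum>l<n. X w l * exp (- \<i> * of_real t * of_nat (g l)) * Y l v)"
    using transition_conj_diagm[OF inv] v w by (simp add: mat_eq_def mmult_diagm_mmult)
  also have "\<dots> = (\<Sum>l<n. X v l * adj X l v)"
  proof (rule sum.cong[OF refl])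
    fix l assume "l \<in> {..<n}"
    then show "X w l * exp (- \<i> * of_real t * of_nat (g l)) * Y l v = X v l * adj X l v"
      using unitary_inverse_eq_adj[OF U inv] v by (simp only: lessThan_iff shift) (simp add: mat_eq_def)
  qed
  also have "\<dots> = 1"
    using U v by (simp add: unitary_def mat_eq_def mmult_def idm_def)
  finally show "\<exists>t>0. cmod (transition n (mmult n (mmult n X (diagm (\<lambda>k. of_nat (g k)))) Y) t w v) = 1"
    using \<open>t > 0\<close> by auto
qed

lemma sum_cis_root_of_unity:
  fixes m :: nat and d :: int
  assumes "0 < m"
  shows "(\<Sum>q<m. cis (2 * pi * (real q * d / m))) = (if int m dvd d then of_nat m else 0)"
proof -
  define z where "z = cis (2 * pi * (d / m))"
  have zq: "cis (2 * pi * (real q * d / m)) = z ^ q" for q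
    by (simp add: z_def DeMoivre mult_ac)
  have "z ^ m = 1"
    using assms by (simp add: z_def DeMoivre cis_multiple_2pi)
  show ?thesis
  proof (cases "int m dvd d")
    case True
    then obtain e where "d = int m * e" by auto
    then have "z = 1"
      using assms by (simp add: z_def cis_multiple_2pi)
    then show ?thesis using True by (simp only: zq) simp
  next
    case False
    have "z \<noteq> 1"
    proof
      assume "z = 1"
      then have "cos (2 * pi * (d / m)) = 1"
        unfolding z_def by (metis cis.simps(1) one_complex.simps(1))
      then obtain k :: int where "2 * pi * (d / m) = k * 2 * pi"
        by (auto simp: cos_one_2pi_int)
      then have "real_of_int d = k * m"
        using assms by (simp add: field_simps)
      then have "d = k * int m"
        by (metis of_int_eq_iff of_int_mult of_int_of_nat_eq)
      then show False using False by simp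
    qed
    then show ?thesis using False \<open>z ^ m = 1\<close> by (simp only: zq) (simp add: geometric_sum)
  qed
qed

lemma sum_cis_residue_difference:
  fixes m u u' :: nat
  assumes "u < m" "u' < m"
  shows "(\<Sum>q<m. cis (2 * pi * (real q * (real u' - real u) / m))) = (if u = u' then of_nat m else 0)"
proof -
  have "int m dvd int u' - int u \<longleftrightarrow> int u' mod int m = int u mod int m"
    by (simp add: mod_eq_dvd_iff)
  also have "\<dots> \<longleftrightarrow> u = u'"
    using assms by auto
  finally show ?thesis
    using sum_cis_root_of_unity[of m "int u' - int u"] assms by simp
qed

lemma sum_lessThan_mult_nat:
  fixes f :: "nat \<Rightarrow> 'a::comm_monoid_add"
  shows "(\<Sum>j<d * e. f j) = (\<Sum>q<d. \<Sum>r<e. f (q * e + r))"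
proof -
  have "(\<Sum>j<d * e. f j) = (\<Sum>q<d. \<Sum>j\<in>{q * e..<q * e + e}. f j)"
    by (rule sum.nat_group[symmetric])
  also have "\<dots> = (\<Sum>q<d. \<Sum>r<e. f (q * e + r))"
  proof (rule sum.cong[OF refl])
    fix q
    show "(\<Sum>j\<in>{q * e..<q * e + e}. f j) = (\<Sum>r<e. f (q * e + r))"
      using sum.shift_bounds_nat_ivl[of f 0 "q * e" e] by (simp add: atLeast0LessThan add.commute)
  qed
  finally show ?thesis .
qed

lemma vartheta_orthogonality:
  fixes \<beta> d e k k' :: nat
  assumes "0 < \<beta>" "0 < d" "0 < e" "k < d * e" "k' < d * e"
  shows "(\<Sum>j<d * e. cis (2 * pi * (real (vartheta \<beta> e j * vartheta \<beta> d k')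
                                   - real (vartheta \<beta> e j * vartheta \<beta> d k)) / real (\<beta> * (d * e))))
         = (if k = k' then of_nat (d * e) else 0)"
proof -
  define s s' u u' where "s = k div d" and "s' = k' div d" and "u = k mod d" and "u' = k' mod d"
  have bounds: "s < e" "s' < e" "u < d" "u' < d"
    using assms by (auto simp: s_def s'_def u_def u'_def less_mult_imp_div_less mult.commute)
  define w where "w = (real s' - real s) / e + (real u' - real u) / real (\<beta> * (d * e))"
  \<comment> \<open>writing j = q e + r, the phase is an integer plus q (u' - u) / d plus r w\<close>
  have phase: "cis (2 * pi * (real (vartheta \<beta> e (q * e + r) * vartheta \<beta> d k')
                             - real (vartheta \<beta> e (q * e + r) * vartheta \<beta> d k)) / real (\<beta> * (d * e)))
      = cis (2 * pi * (real q * (real u' - real u) / d)) * cis (2 * pi * (real r * w))" if "r < e" for q r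
  proof -
    have "2 * pi * (real (vartheta \<beta> e (q * e + r) * vartheta \<beta> d k')
                    - real (vartheta \<beta> e (q * e + r) * vartheta \<beta> d k)) / real (\<beta> * (d * e))
        = 2 * pi * of_int (int \<beta> * int q * (int s' - int s))
          + (2 * pi * (real q * (real u' - real u) / d) + 2 * pi * (real r * w))"
      using that assms by (simp add: vartheta_def s_def s'_def u_def u'_def w_def field_simps)
    then show ?thesis
      by (simp add: cis_multiple_2pi flip: cis_mult)
  qed
  have "(\<Sum>j<d * e. cis (2 * pi * (real (vartheta \<beta> e j * vartheta \<beta> d k')
                                   - real (vartheta \<beta> e j * vartheta \<beta> d k)) / real (\<beta> * (d * e))))
      = (\<Sum>q<d. \<Sum>r<e. cis (2 * pi * (real q * (real u' - real u) / d)) * cis (2 * pi * (real r * w)))"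
    unfolding sum_lessThan_mult_nat by (intro sum.cong refl) (rule phase, simp)
  also have "\<dots> = (\<Sum>q<d. cis (2 * pi * (real q * (real u' - real u) / d))) * (\<Sum>r<e. cis (2 * pi * (real r * w)))"
    by (simp only: sum_product)
  also have "\<dots> = (if s = s' \<and> u = u' then of_nat (d * e) else 0)"
  proof (cases "u = u'")
    case True
    then have "w = (real s' - real s) / e"
      by (simp add: w_def)
    then show ?thesis
      using True bounds sum_cis_residue_difference[of s e s'] sum_cis_residue_difference[of u d u']
      by (simp add: times_divide_eq_right)
  next
    case False
    then show ?thesis
      using bounds sum_cis_residue_difference[of u d u'] by simp
  qed
  also have "(s = s' \<and> u = u') \<longleftrightarrow> k = k'"
    by (metis s_def s'_def u_def u'_def div_mult_mod_eq)
  finally show ?thesis .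
qed

lemma cnj_zeta_power_mult:
  "cnj (c * zeta N ^ x) * (c * zeta N ^ y) = of_real ((cmod c)\<^sup>2) * cis (2 * pi * (real y - real x) / N)"
proof -
  have "cnj (c * zeta N ^ x) * (c * zeta N ^ y) = (c * cnj c) * (cis (- (2 * pi * real x / N)) * cis (2 * pi * real y / N))"
    by (simp add: zeta_power cis_cnj mult_ac)
  also have "\<dots> = of_real ((cmod c)\<^sup>2) * cis (2 * pi * (real y - real x) / N)"
    unfolding complex_norm_square[symmetric] by (simp add: cis_mult diff_divide_distrib right_diff_distrib)
  finally show ?thesis .
qed

lemma unitary_vartheta_matrix:
  fixes \<beta> a b :: nat
  assumes "0 < \<beta>" "0 < a" "0 < b" and c: "(cmod c)\<^sup>2 = 1 / real (a * b)"
  shows "unitary (a * b) (\<lambda>j k. c * zeta (\<beta> * (a * b)) ^ (vartheta \<beta> a j * vartheta \<beta> b k))"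
    (is "unitary _ ?X")
proof -
  have entry: "cnj (?X j k) * ?X j' k' = of_real (1 / real (a * b))
      * cis (2 * pi * (real (vartheta \<beta> a j' * vartheta \<beta> b k') - real (vartheta \<beta> a j * vartheta \<beta> b k))
             / real (\<beta> * (a * b)))" for j k j' k'
    by (simp only: cnj_zeta_power_mult c)
  have rows: "mmult (a * b) ?X (adj ?X) i j = idm i j" if "i < a * b" "j < a * b" for i j
  proof -
    have "mmult (a * b) ?X (adj ?X) i j = (\<Sum>k<a * b. cnj (?X j k) * ?X i k)"
      by (simp add: mmult_def adj_def mult.commute)
    also have "\<dots> = of_real (1 / real (a * b)) * (\<Sum>k<a * b. cis (2 * pi *
        (real (vartheta \<beta> b k * vartheta \<beta> a i) - real (vartheta \<beta> b k * vartheta \<beta> a j)) / real (\<beta> * (a * b))))"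
      unfolding entry sum_distrib_left by (simp only: mult.commute[of "vartheta \<beta> a _"])
    also have "\<dots> = of_real (1 / real (a * b)) * (if j = i then of_nat (a * b) else 0)"
      using vartheta_orthogonality[of \<beta> a b j i] assms that by simp
    finally show ?thesis
      using assms by (auto simp: idm_def)
  qed
  have cols: "mmult (a * b) (adj ?X) ?X i j = idm i j" if "i < a * b" "j < a * b" for i j
  proof -
    have "mmult (a * b) (adj ?X) ?X i j = (\<Sum>k<b * a. cnj (?X k i) * ?X k j)"
      by (simp add: mmult_def adj_def mult.commute[of b])
    also have "\<dots> = of_real (1 / real (a * b)) * (\<Sum>k<b * a. cis (2 * pi *
        (real (vartheta \<beta> a k * vartheta \<beta> b j) - real (vartheta \<beta> a k * vartheta \<beta> b i)) / real (\<beta> * (b * a))))"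
      unfolding entry sum_distrib_left by (simp only: mult.commute[of b])
    also have "\<dots> = of_real (1 / real (a * b)) * (if i = j then of_nat (a * b) else 0)"
      using vartheta_orthogonality[of \<beta> b a i j] assms that by (simp add: mult.commute[of b])
    finally show ?thesis
      using assms by (auto simp: idm_def)
  qed
  show ?thesis
    by (simp add: unitary_def mat_eq_def rows cols)
qed

theorem theorem7:
  fixes a b \<beta> n :: nat and X :: "nat \<Rightarrow> nat \<Rightarrow> complex"
  assumes "b \<ge> 2" and "a \<ge> b" and "n = a * b" and "\<beta> \<ge> 2"
    and "X = (\<lambda>j k. (1 / complex_of_real (sqrt (real n)))
                 * zeta (\<beta> * n) ^ (vartheta \<beta> a j * vartheta \<beta> b k))"
  shows "type_II n X \<and>
    (\<forall>Xinv. is_inverse n X Xinv \<longrightarrow>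
       universal_pst n (mmult n (mmult n X (diagm (\<lambda>k. of_nat (vartheta \<beta> b k)))) Xinv))"
proof -
  \<comment> \<open>of the size hypotheses, only positivity of a, b and \<beta> is needed\<close>
  define c :: complex where "c = 1 / complex_of_real (sqrt (real n))"
  have pos: "0 < \<beta>" "0 < a" "0 < b" "0 < n"
    using assms(1-4) by auto
  have "(cmod c)\<^sup>2 = 1 / real (a * b)"
    using pos assms(3) by (simp add: c_def norm_divide power_divide)
  moreover have "X = (\<lambda>j k. c * zeta (\<beta> * (a * b)) ^ (vartheta \<beta> a j * vartheta \<beta> b k))"
    using assms(3,5) by (simp add: c_def)
  ultimately have U: "unitary n X"
    using unitary_vartheta_matrix[OF pos(1-3)] assms(3) by simp
  have "cmod (X j k) = cmod c" for j k
    using assms(5) by (simp add: c_def norm_divide zeta_power)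
  then have "type_II n X"
    using U by (auto simp: type_II_def)
  moreover have "universal_pst n (mmult n (mmult n X (diagm (\<lambda>k. of_nat (vartheta \<beta> b k)))) Xinv)"
    if "is_inverse n X Xinv" for Xinv
    using universal_pst_zeta_power_matrix[OF U _ _ that, where N = "\<beta> * n" and c = c
        and f = "vartheta \<beta> a" and g = "vartheta \<beta> b"] pos assms(5)
    by (simp add: c_def)
  ultimately show ?thesis
    by blast
qed

end
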